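(* Fix $q\in[1,\infty)$. Let $(\mathcal X,d)$ be a metric space with the $q$-barycenter property: for every $K\ge1$, $\boldsymbol w\in\Delta^{K-1}$ and $\boldsymbol a\in\mathcal X^K$ the function $C\mapsto\sum_{s=1}^Kw_sd^q(a_s,C)$ attains its minimum on $\mathcal X$. Let $\boldsymbol a=(a_1,\dots,a_K)\in\mathcal X^K$, $\boldsymbol w\in\Delta^{K-1}$ and $C_{\boldsymbol a}\in\arg\min_C\sum_sw_sd^q(a_s,C)$. Fix $\alpha\in[0,1]$ and assume $\boldsymbol b\in\mathcal X^K$ satisfies, for all $s$, $$d(a_s,C_{\boldsymbol a})=d(a_s,b_s)+d(b_s,C_{\boldsymbol a}),\qquad d(b_s,a_s)=(1-\alpha^{1/q})\,d(a_s,C_{\boldsymbol a}).$$ Then $\boldsymbol b$ solves $$\inf_{\boldsymbol b'\in\mathcal X^K}\Big\{\sum_{s=1}^Kw_sd^q(b'_s,a_s)\;:\;\min_{C\in\mathcal X}\sum_{s=1}^Kw_sd^q(b'_s,C)\le\alpha\sum_{s=1}^Kw_sd^q(a_s,C_{\boldsymbol a})\Big\}.$$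
   Context: $\Delta^{K-1}$ is the probability simplex in $\mathbb R^K$. *)

theory Defs
  imports "HOL-Analysis.Analysis"
begin

definition prob_simplex :: "nat \<Rightarrow> (nat \<Rightarrow> real) set" where
  "prob_simplex K = {w. (\<forall>s<K. 0 \<le> w s) \<and> (\<Sum>s<K. w s) = 1}"

definition wcost :: "real \<Rightarrow> nat \<Rightarrow> (nat \<Rightarrow> real) \<Rightarrow> (nat \<Rightarrow> 'a::metric_space) \<Rightarrow> 'a \<Rightarrow> real" where
  "wcost q K w a C = (\<Sum>s<K. w s * (dist (a s) C) powr q)"

definition q_barycenter_property :: "real \<Rightarrow> 'a::metric_space itself \<Rightarrow> bool" where
  "q_barycenter_property q (TYPE('a)) \<longleftrightarrow>
     (\<forall>K\<ge>1. \<forall>w\<in>prob_simplex K. \<forall>a::nat \<Rightarrow> 'a.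
        \<exists>C. \<forall>C'. wcost q K w a C \<le> wcost q K w a C')"

end

theory Submission
  imports Defs
begin

text \<open>Put \<open>t = \<alpha> powr (1/q)\<close> and let \<open>W\<close> be the minimal cost of \<open>a\<close>.
  The points \<open>b s\<close> lie on geodesics from \<open>a s\<close> to \<open>Ca\<close> at distance \<open>t * dist (a s) Ca\<close>
  from \<open>Ca\<close>, so \<open>b\<close> has cost \<open>\<alpha> * W\<close> at \<open>Ca\<close> and transport cost \<open>(1 - t) powr q * W\<close> from \<open>a\<close>.
  Conversely, let \<open>b'\<close> have transport cost \<open>X\<close> and a barycenter \<open>C'\<close> of cost \<open>V \<le> \<alpha> * W\<close>.
  By the triangle inequality and convexity of \<open>x powr q\<close> in the form
  \<open>(u + v) powr q \<le> (1 - t) powr (1 - q) * u powr q + t powr (1 - q) * v powr q\<close>,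
  \<open>W \<le> wcost q K w a C' \<le> (1 - t) powr (1 - q) * X + t powr (1 - q) * V \<le> (1 - t) powr (1 - q) * X + t * W\<close>,
  which rearranges to \<open>(1 - t) powr q * W \<le> X\<close>.\<close>

lemma one_le_powr_of_le_one:
  fixes x p :: real
  assumes "0 < x" "x \<le> 1" "p \<le> 0"
  shows "1 \<le> x powr p"
proof -
  have "1 \<le> (1 / x) powr (- p)"
    using assms by (intro ge_one_powr_ge_zero) auto
  then show ?thesis
    using assms by (simp add: powr_divide powr_minus_divide)
qed

lemma powr_add_le_convex_split:
  fixes q l u v :: real
  assumes q: "1 \<le> q" and l: "0 < l" "l < 1" and uv: "0 \<le> u" "0 \<le> v"
  shows "(u + v) powr q \<le> (1 - l) powr (1 - q) * u powr q + l powr (1 - q) * v powr q"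
proof (cases "u = 0 \<or> v = 0")
  case True
  have "1 \<le> (1 - l) powr (1 - q)" "1 \<le> l powr (1 - q)"
    using q l by (auto intro: one_le_powr_of_le_one)
  with True show ?thesis
    by (auto simp: mult_le_cancel_right1)
next
  case False
  with uv have "0 < u" "0 < v" by auto
  then have "((1 - l) *\<^sub>R (u / (1 - l)) + l *\<^sub>R (v / l)) powr q
      \<le> (1 - l) * (u / (1 - l)) powr q + l * (v / l) powr q"
    using convex_onD[OF powr_convex[OF q], of l "u / (1 - l)" "v / l"] l by auto
  moreover have "(1 - l) * (u / (1 - l)) powr q = (1 - l) powr (1 - q) * u powr q"
    "l * (v / l) powr q = l powr (1 - q) * v powr q"
    using l uv by (simp_all add: powr_divide powr_diff)
  ultimately show ?thesis
    using l by simp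
qed

lemma sum_weighted_powr_scale:
  fixes x y w :: "nat \<Rightarrow> real"
  assumes "\<forall>s<K. x s = c * y s"
  shows "(\<Sum>s<K. w s * x s powr q) = c powr q * (\<Sum>s<K. w s * y s powr q)"
  using assms by (simp add: sum_distrib_left powr_mult algebra_simps)

lemma wcost_nonneg:
  assumes "\<forall>s<K. 0 \<le> w s"
  shows "0 \<le> wcost q K w a C"
  using assms unfolding wcost_def by (auto intro!: sum_nonneg)

lemma bdd_below_range_wcost:
  assumes "\<forall>s<K. 0 \<le> w s"
  shows "bdd_below (range (wcost q K w a))"
  using wcost_nonneg[OF assms] by (intro bdd_belowI[where m = 0]) auto

lemma wcost_le_triangle:
  assumes w: "\<forall>s<K. 0 \<le> w s" and q: "0 \<le> q"
  shows "wcost q K w a C \<le> (\<Sum>s<K. w s * (dist (b s) (a s) + dist (b s) C) powr q)"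
  unfolding wcost_def
proof (intro sum_mono mult_left_mono)
  fix s assume "s \<in> {..<K}"
  then show "0 \<le> w s" using w by auto
  show "dist (a s) C powr q \<le> (dist (b s) (a s) + dist (b s) C) powr q"
    using q by (intro powr_mono2) (auto simp: dist_triangle3)
qed

lemma wcost_le_convex_split:
  assumes w: "\<forall>s<K. 0 \<le> w s" and q: "1 \<le> q" and l: "0 < l" "l < 1"
  shows "wcost q K w a C
    \<le> (1 - l) powr (1 - q) * (\<Sum>s<K. w s * dist (b s) (a s) powr q) + l powr (1 - q) * wcost q K w b C"
proof -
  have "wcost q K w a C \<le> (\<Sum>s<K. w s * (dist (b s) (a s) + dist (b s) C) powr q)"
    using w q by (intro wcost_le_triangle) auto
  also have "\<dots> \<le> (\<Sum>s<K. w s * ((1 - l) powr (1 - q) * dist (b s) (a s) powr q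
                                  + l powr (1 - q) * dist (b s) C powr q))"
    using w by (intro sum_mono mult_left_mono powr_add_le_convex_split[OF q l]) auto
  also have "\<dots> = (1 - l) powr (1 - q) * (\<Sum>s<K. w s * dist (b s) (a s) powr q)
                  + l powr (1 - q) * wcost q K w b C"
    unfolding wcost_def by (simp add: algebra_simps sum.distrib sum_distrib_left)
  finally show ?thesis .
qed

lemma wcost_le_of_wcost_eq_0:
  assumes w: "\<forall>s<K. 0 \<le> w s" and q: "0 \<le> q" and b: "wcost q K w b C = 0"
  shows "wcost q K w a C \<le> (\<Sum>s<K. w s * dist (b s) (a s) powr q)"
proof -
  have "\<forall>s\<in>{..<K}. w s * dist (b s) C powr q = 0"
    using b w unfolding wcost_def by (subst sum_nonneg_eq_0_iff[symmetric]) auto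
  then have "(\<Sum>s<K. w s * (dist (b s) (a s) + dist (b s) C) powr q)
      = (\<Sum>s<K. w s * dist (b s) (a s) powr q)"
    by (intro sum.cong) auto
  then show ?thesis
    using wcost_le_triangle[OF w q, where a = a and b = b and C = C] by simp
qed

lemma transport_cost_lower_bound:
  fixes q t :: real and a b :: "nat \<Rightarrow> 'a::metric_space"
  assumes w: "\<forall>s<K. 0 \<le> w s" and q: "1 \<le> q" and t: "0 \<le> t" "t \<le> 1"
    and Ca: "\<forall>C. wcost q K w a Ca \<le> wcost q K w a C"
    and feasible: "wcost q K w b C \<le> t powr q * wcost q K w a Ca"
  shows "(1 - t) powr q * wcost q K w a Ca \<le> (\<Sum>s<K. w s * dist (b s) (a s) powr q)"
    (is "_ * ?W \<le> ?X")
proof -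
  have "?W \<le> wcost q K w a C" using Ca by blast
  consider "t = 0" | "t = 1" | "0 < t" "t < 1" using t by linarith
  then show ?thesis
  proof cases
    case 1
    then have "wcost q K w b C = 0"
      using feasible wcost_nonneg[OF w, of q b C] by simp
    then have "wcost q K w a C \<le> ?X"
      using q by (intro wcost_le_of_wcost_eq_0[OF w]) auto
    with \<open>?W \<le> wcost q K w a C\<close> 1 show ?thesis
      by simp
  next
    case 2
    then show ?thesis
      using w q by (auto intro!: sum_nonneg)
  next
    case 3
    note \<open>?W \<le> wcost q K w a C\<close>
    also have "wcost q K w a C \<le> (1 - t) powr (1 - q) * ?X + t powr (1 - q) * wcost q K w b C"
      using wcost_le_convex_split[OF w q 3] .
    also have "\<dots> \<le> (1 - t) powr (1 - q) * ?X + t powr (1 - q) * (t powr q * ?W)"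
      using feasible by (intro add_left_mono mult_left_mono) auto
    also have "t powr (1 - q) * (t powr q * ?W) = t * ?W"
      using 3 by (simp add: powr_add[symmetric] mult.assoc[symmetric])
    finally have scaled: "(1 - t) * ?W \<le> (1 - t) powr (1 - q) * ?X"
      by (simp add: algebra_simps)
    have "(1 - t) powr q * ?W = (1 - t) powr (q - 1) * ((1 - t) * ?W)"
      using 3 by (simp add: powr_diff)
    also have "\<dots> \<le> (1 - t) powr (q - 1) * ((1 - t) powr (1 - q) * ?X)"
      using scaled by (intro mult_left_mono) auto
    also have "\<dots> = ?X"
      using 3 by (simp add: powr_add[symmetric] mult.assoc[symmetric])
    finally show ?thesis .
  qed
qed

theorem lemma22:
  fixes q \<alpha> :: real and K :: nat and w :: "nat \<Rightarrow> real"
    and a b :: "nat \<Rightarrow> 'a::metric_space" and Ca :: 'a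
  assumes hq: "1 \<le> q"
    and hbary: "q_barycenter_property q TYPE('a)"
    and hK: "1 \<le> K"
    and hw: "w \<in> prob_simplex K"
    and hCa: "\<forall>C. wcost q K w a Ca \<le> wcost q K w a C"
    and h\<alpha>: "0 \<le> \<alpha>" "\<alpha> \<le> 1"
    and hgeo: "\<forall>s<K. dist (a s) Ca = dist (a s) (b s) + dist (b s) Ca"
    and hdist: "\<forall>s<K. dist (b s) (a s) = (1 - \<alpha> powr (1 / q)) * dist (a s) Ca"
  shows "(INF C. wcost q K w b C) \<le> \<alpha> * wcost q K w a Ca \<and>
         (\<forall>b'::nat \<Rightarrow> 'a. (INF C. wcost q K w b' C) \<le> \<alpha> * wcost q K w a Ca \<longrightarrow>
            (\<Sum>s<K. w s * (dist (b s) (a s)) powr q) \<le> (\<Sum>s<K. w s * (dist (b' s) (a s)) powr q))"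
proof -
  define t where "t = \<alpha> powr (1 / q)"
  have w: "\<forall>s<K. 0 \<le> w s" using hw unfolding prob_simplex_def by auto
  have t: "0 \<le> t" "t \<le> 1"
    using h\<alpha> hq unfolding t_def by (auto intro: powr_le1)
  have tq: "t powr q = \<alpha>"
    using h\<alpha> hq unfolding t_def by (simp add: powr_powr)
  have "\<forall>s<K. dist (b s) Ca = t * dist (a s) Ca"
    using hgeo hdist by (simp add: dist_commute t_def algebra_simps)
  then have "wcost q K w b Ca = \<alpha> * wcost q K w a Ca"
    unfolding wcost_def tq[symmetric] by (rule sum_weighted_powr_scale)
  then have feasible: "(INF C. wcost q K w b C) \<le> \<alpha> * wcost q K w a Ca"
    using cINF_lower[OF bdd_below_range_wcost[OF w, where a = b and q = q], of Ca] by simp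
  have transport_b: "(\<Sum>s<K. w s * dist (b s) (a s) powr q) = (1 - t) powr q * wcost q K w a Ca"
    unfolding wcost_def using hdist t_def by (intro sum_weighted_powr_scale) auto
  have "(\<Sum>s<K. w s * dist (b s) (a s) powr q) \<le> (\<Sum>s<K. w s * dist (b' s) (a s) powr q)"
    if "(INF C. wcost q K w b' C) \<le> \<alpha> * wcost q K w a Ca" for b' :: "nat \<Rightarrow> 'a"
  proof -
    obtain C' where C': "\<forall>C. wcost q K w b' C' \<le> wcost q K w b' C"
      using hbary hK hw unfolding q_barycenter_property_def by blast
    then have "wcost q K w b' C' \<le> (INF C. wcost q K w b' C)"
      by (intro cINF_greatest) auto
    with that have "wcost q K w b' C' \<le> t powr q * wcost q K w a Ca"
      using tq by simp
    then show ?thesis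
      unfolding transport_b using transport_cost_lower_bound[OF w hq t hCa] by blast
  qed
  with feasible show ?thesis by blast
qed

end
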